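(* Let $\Phi$ be a MAX NAE-$\{3,5\}$-SAT instance on variables $x_1,\dots,x_n$ with positive weights normalized to total weight $1$, and suppose there are unit vectors $\mathbf v_1,\dots,\mathbf v_n$ such that, writing the literal vector of a literal $b x_i$ as $b\mathbf v_i$: for every $3$-clause $\mathrm{NAE}_3(z_1,z_2,z_3)$ the literal vectors $\mathbf u_1,\mathbf u_2,\mathbf u_3$ satisfy $\mathbf u_i\cdot\mathbf u_j=-\tfrac13$ for all $i\ne j$; and for every $5$-clause $\mathrm{NAE}_5(z_1,\dots,z_5)$ the literal vectors (in a suitable ordering) satisfy $\mathbf u_i\cdot\mathbf u_j=\tfrac13$ for $1\le i<j\le 4$ and $\mathbf u_i\cdot\mathbf u_5=0$ for $1\le i\le 4$. Then $\Phi$ has completeness $1$, i.e., the optimal value of the Basic SDP of $\Phi$ equals $1$.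
   Context: $\mathrm{NAE}_k(y_1,\dots,y_k)$ is $0$ if $y_1=\dots=y_k$ and $1$ otherwise. The Basic SDP for an instance with variables $x_1,\dots,x_n$ and weighted clauses $C$ (weights $w_C$) has unit vectors $\mathbf v_0,\mathbf v_1,\dots,\mathbf v_n\in\mathbb R^{n+1}$ and, for each clause $C$, a probability distribution $p_C$ over assignments $\alpha$ to the variables of $C$, subject to: for each clause $C$ and variables $x_i,x_j$ in $C$, $\mathbf v_i\cdot\mathbf v_j=\sum_\alpha \alpha(x_i)\alpha(x_j)p_C(\alpha)$, and $\mathbf v_i\cdot\mathbf v_0=\sum_\alpha\alpha(x_i)p_C(\alpha)$; the objective is $\sum_C w_C\sum_\alpha p_C(\alpha)C(\alpha)$, where $C(\alpha)\in\{0,1\}$ indicates whether $\alpha$ satisfies $C$. The completeness of an instance is its Basic SDP optimal value. *)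

theory Defs
  imports "HOL-Analysis.Analysis"
begin

text \<open>A literal is a pair (b, i) with sign b in {-1,1} standing for b x_i.
  A clause NAE_k(z_1,...,z_k) is the list of its k literals.
  An nae_inst is a list of weighted clauses (w_C, C).\<close>

type_synonym lit = "real \<times> nat"
type_synonym clause = "lit list"
type_synonym nae_inst = "(real \<times> clause) list"

definition vars :: "clause \<Rightarrow> nat set" where
  "vars C = snd ` set C"

text \<open>Assignments to the variables of C, values in {-1,1}; extended by 0 outside vars C
  so that the set of assignments is finite.\<close>
definition assigns :: "clause \<Rightarrow> (nat \<Rightarrow> real) set" where
  "assigns C = {\<alpha>. (\<forall>i\<in>vars C. \<alpha> i \<in> {-1, 1}) \<and> (\<forall>i. i \<notin> vars C \<longrightarrow> \<alpha> i = 0)}"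

definition lit_val :: "(nat \<Rightarrow> real) \<Rightarrow> lit \<Rightarrow> real" where
  "lit_val \<alpha> l = fst l * \<alpha> (snd l)"

definition NAE :: "real list \<Rightarrow> real" where
  "NAE ys = (if (\<forall>y\<in>set ys. y = hd ys) then 0 else 1)"

definition clause_val :: "clause \<Rightarrow> (nat \<Rightarrow> real) \<Rightarrow> real" where
  "clause_val C \<alpha> = NAE (map (lit_val \<alpha>) C)"

definition nae35_instance :: "nat \<Rightarrow> nae_inst \<Rightarrow> bool" where
  "nae35_instance n \<Phi> \<longleftrightarrow>
     (\<forall>(w, C)\<in>set \<Phi>. w > 0 \<and> (length C = 3 \<or> length C = 5) \<and>
        (\<forall>(b, i)\<in>set C. b \<in> {-1, 1} \<and> i \<in> {1..n})) \<and>
     (\<Sum>k<length \<Phi>. fst (\<Phi> ! k)) = 1"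

text \<open>Vectors in R^(n+1) are represented as functions nat => real, coordinates 0..n.\<close>
definition ip :: "nat \<Rightarrow> (nat \<Rightarrow> real) \<Rightarrow> (nat \<Rightarrow> real) \<Rightarrow> real" where
  "ip n x y = (\<Sum>k\<le>n. x k * y k)"

definition sdp_feasible :: "nat \<Rightarrow> nae_inst \<Rightarrow> (nat \<Rightarrow> nat \<Rightarrow> real) \<Rightarrow>
    (nat \<Rightarrow> (nat \<Rightarrow> real) \<Rightarrow> real) \<Rightarrow> bool" where
  "sdp_feasible n \<Phi> v p \<longleftrightarrow>
     (\<forall>i\<le>n. ip n (v i) (v i) = 1) \<and>
     (\<forall>k<length \<Phi>. let C = snd (\<Phi> ! k) in
        (\<forall>\<alpha>\<in>assigns C. p k \<alpha> \<ge> 0) \<and>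
        (\<Sum>\<alpha>\<in>assigns C. p k \<alpha>) = 1 \<and>
        (\<forall>i\<in>vars C. \<forall>j\<in>vars C.
            ip n (v i) (v j) = (\<Sum>\<alpha>\<in>assigns C. \<alpha> i * \<alpha> j * p k \<alpha>)) \<and>
        (\<forall>i\<in>vars C. ip n (v i) (v 0) = (\<Sum>\<alpha>\<in>assigns C. \<alpha> i * p k \<alpha>)))"

definition sdp_objective :: "nae_inst \<Rightarrow> (nat \<Rightarrow> (nat \<Rightarrow> real) \<Rightarrow> real) \<Rightarrow> real" where
  "sdp_objective \<Phi> p =
     (\<Sum>k<length \<Phi>. fst (\<Phi> ! k) *
        (\<Sum>\<alpha>\<in>assigns (snd (\<Phi> ! k)). p k \<alpha> * clause_val (snd (\<Phi> ! k)) \<alpha>))"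

definition completeness :: "nat \<Rightarrow> nae_inst \<Rightarrow> real" where
  "completeness n \<Phi> = Sup {sdp_objective \<Phi> p | v p. sdp_feasible n \<Phi> v p}"

definition lit_vec :: "(nat \<Rightarrow> 'a::real_inner) \<Rightarrow> lit \<Rightarrow> 'a" where
  "lit_vec u l = fst l *\<^sub>R u (snd l)"

end

theory Submission
  imports Defs
begin

text \<open>The Basic SDP value never exceeds the total weight 1, so it suffices to exhibit a feasible
  solution of value 1. Its vectors are \<open>v\<^sub>i = u\<^sub>i\<close> together with a unit vector \<open>v\<^sub>0\<close> orthogonal
  to all of them, transported to \<open>\<real>\<^sup>n\<^sup>+\<^sup>1\<close> by Gram--Schmidt. Each clause then needs a distribution
  on not-all-equal sign patterns of its literals with zero means and pairwise moments equal to
  the inner products of the literal vectors. For a 3-clause this is the uniform distribution on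
  the six non-constant patterns. For a 5-clause ordered as in the hypothesis it puts weight 1/6
  on \<open>\<plusminus>(1,1,1,1,-1)\<close> and weight 1/12 on each of the eight patterns \<open>\<plusminus>(1,1,1,1,1)\<close> with one
  of the first four signs flipped. The prescribed inner products also force the variables of a
  clause to be distinct, since two literals on one variable have inner product \<open>\<plusminus>1\<close>.\<close>

lemma orthogonal_decomposition:
  fixes w :: "nat \<Rightarrow> 'a::real_inner"
  shows "\<exists>e g. (\<forall>s<k. \<forall>t<k. s \<noteq> t \<longrightarrow> e s \<bullet> e t = 0) \<and>
           (\<forall>i<k. w i = (\<Sum>t<k. g i t *\<^sub>R e t))"
proof (induction k)
  case 0
  then show ?case by auto
next
  case (Suc k)
  then obtain e g where orth: "\<forall>s<k. \<forall>t<k. s \<noteq> t \<longrightarrow> e s \<bullet> e t = 0"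
    and rep: "\<forall>i<k. w i = (\<Sum>t<k. g i t *\<^sub>R e t)" by blast
  define c where "c t = (w k \<bullet> e t) / (e t \<bullet> e t)" for t
  define r where "r = w k - (\<Sum>t<k. c t *\<^sub>R e t)"
  define g' where "g' i t = (if t = k then (if i = k then 1 else 0) else if i = k then c t else g i t)"
    for i t
  have r_orth: "r \<bullet> e s = 0" if "s < k" for s
  proof -
    have "(\<Sum>t<k. c t *\<^sub>R e t) \<bullet> e s = (\<Sum>t<k. if t = s then c s * (e s \<bullet> e s) else 0)"
      unfolding inner_sum_left using orth that by (intro sum.cong) auto
    also have "\<dots> = w k \<bullet> e s"
      using that by (cases "e s = 0") (simp_all add: c_def)
    finally show ?thesis unfolding r_def by (simp add: inner_diff_left)
  qed
  have "\<forall>s<Suc k. \<forall>t<Suc k. s \<noteq> t \<longrightarrow> (e(k := r)) s \<bullet> (e(k := r)) t = 0"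
    using orth r_orth by (auto simp: less_Suc_eq inner_commute)
  moreover have "w i = (\<Sum>t<Suc k. g' i t *\<^sub>R (e(k := r)) t)" if "i < Suc k" for i
    using that rep by (cases "i = k") (simp_all add: g'_def r_def)
  ultimately show ?case by blast
qed

lemma gram_matrix_coordinates:
  fixes w :: "nat \<Rightarrow> 'a::real_inner"
  shows "\<exists>f. \<forall>i<k. \<forall>j<k. (\<Sum>c<k. f i c * f j c) = w i \<bullet> w j"
proof -
  obtain e g where orth: "\<forall>s<k. \<forall>t<k. s \<noteq> t \<longrightarrow> e s \<bullet> e t = 0"
    and rep: "\<forall>i<k. w i = (\<Sum>t<k. g i t *\<^sub>R e t)"
    using orthogonal_decomposition by blast
  have norm_sq: "e c \<bullet> e c = norm (e c) * norm (e c)" for c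
    using power2_norm_eq_inner[of "e c"] by (simp only: power2_eq_square)
  have "w i \<bullet> w j = (\<Sum>c<k. (g i c * norm (e c)) * (g j c * norm (e c)))"
    if "i < k" "j < k" for i j
  proof -
    have "w i \<bullet> w j = (\<Sum>t<k. \<Sum>s<k. g i t * g j s * (e t \<bullet> e s))"
      using rep that
      by (simp add: inner_sum_left inner_sum_right sum_distrib_left mult.assoc)
        (subst sum.swap, simp add: mult_ac inner_commute)
    also have "\<dots> = (\<Sum>t<k. \<Sum>s<k. if s = t then g i t * g j t * (e t \<bullet> e t) else 0)"
      using orth by (intro sum.cong refl) auto
    also have "\<dots> = (\<Sum>c<k. (g i c * norm (e c)) * (g j c * norm (e c)))"
      by (simp add: norm_sq mult_ac)
    finally show ?thesis .
  qed
  then show ?thesis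
    by (intro exI[of _ "\<lambda>i c. g i c * norm (e c)"] allI impI) simp
qed

lemma exists_sdp_vectors:
  fixes u :: "nat \<Rightarrow> 'a::real_inner"
  assumes unit: "\<forall>i\<in>{1..n}. norm (u i) = 1"
  obtains v where "\<forall>i\<le>n. ip n (v i) (v i) = 1"
    and "\<forall>i\<in>{1..n}. \<forall>j\<in>{1..n}. ip n (v i) (v j) = u i \<bullet> u j"
    and "\<forall>i\<in>{1..n}. ip n (v i) (v 0) = 0"
proof -
  define W :: "nat \<Rightarrow> 'a \<times> real" where "W i = (if i = 0 then (0, 1) else (u i, 0))" for i
  obtain v where v: "\<forall>i<Suc n. \<forall>j<Suc n. (\<Sum>c<Suc n. v i c * v j c) = W i \<bullet> W j"
    using gram_matrix_coordinates by blast
  have ip_v: "ip n (v i) (v j) = W i \<bullet> W j" if "i \<le> n" "j \<le> n" for i j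
    using v that unfolding ip_def by (simp add: lessThan_Suc_atMost[symmetric])
  have "u i \<bullet> u i = 1" if "i \<in> {1..n}" for i
    using unit that by (simp add: power2_norm_eq_inner[symmetric])
  then show ?thesis
    by (intro that[of v]) (auto simp: ip_v W_def)
qed

lemma ball_set_case_prod_nth:
  assumes "\<forall>(a, b)\<in>set xs. P a b" and "m < length xs"
  shows "P (fst (xs!m)) (snd (xs!m))"
  using assms nth_mem[of m xs] by (auto simp: case_prod_beta)

lemma vars_conv_nth: "i \<in> vars C \<longleftrightarrow> (\<exists>m<length C. i = snd (C!m))"
  unfolding vars_def set_map[symmetric] in_set_conv_nth by auto

lemma lit_vec_inner: "lit_vec u l \<bullet> lit_vec u l' = fst l * fst l' * (u (snd l) \<bullet> u (snd l'))"
  by (simp add: lit_vec_def)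

lemma lit_vec_inner_same_var:
  assumes "norm (u (snd l)) = 1" and "snd l = snd l'"
  shows "lit_vec u l \<bullet> lit_vec u l' = fst l * fst l'"
  using assms by (simp add: lit_vec_inner dot_square_norm)

lemma lit_vec_inner_self:
  assumes "fst l \<in> {-1, 1}" and "norm (u (snd l)) = 1"
  shows "lit_vec u l \<bullet> lit_vec u l = 1"
  using assms by (auto simp: lit_vec_inner_same_var)

lemma distinct_vars_if_lit_inner_not_pm1:
  fixes u :: "nat \<Rightarrow> 'a::real_inner"
  assumes lits: "\<forall>(b, i)\<in>set C. b \<in> {-1, 1} \<and> norm (u i) = 1"
    and inner: "\<forall>m<length C. \<forall>l<length C. m \<noteq> l \<longrightarrow> lit_vec u (C!m) \<bullet> lit_vec u (C!l) \<notin> {-1, 1}"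
  shows "distinct (map snd C)"
  unfolding distinct_conv_nth
proof (intro allI impI)
  fix m l assume ml: "m < length (map snd C)" "l < length (map snd C)" "m \<noteq> l"
  have "fst (C!m) \<in> {-1, 1}" "fst (C!l) \<in> {-1, 1}" "norm (u (snd (C!m))) = 1"
    using ball_set_case_prod_nth[OF lits] ml by auto
  then have "snd (C!m) = snd (C!l) \<Longrightarrow> lit_vec u (C!m) \<bullet> lit_vec u (C!l) \<in> {-1, 1}"
    by (auto simp: lit_vec_inner_same_var)
  then show "map snd C ! m \<noteq> map snd C ! l"
    using inner ml by auto
qed

text \<open>For a clause with distinct variables, the assignment under which the \<open>m\<close>-th literal
  takes the value \<open>t!m\<close>.\<close>
definition assignment_of_pattern :: "clause \<Rightarrow> real list \<Rightarrow> nat \<Rightarrow> real" where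
  "assignment_of_pattern C t i = (\<Sum>m<length C. if snd (C!m) = i then fst (C!m) * t!m else 0)"

lemma assignment_of_pattern_var:
  assumes "distinct (map snd C)" and "m < length C"
  shows "assignment_of_pattern C t (snd (C!m)) = fst (C!m) * t!m"
proof -
  have "snd (C!m') = snd (C!m) \<longleftrightarrow> m' = m" if "m' < length C" for m'
    using assms that nth_eq_iff_index_eq[of "map snd C" m' m] by auto
  then have "assignment_of_pattern C t (snd (C!m)) =
      (\<Sum>m'<length C. if m' = m then fst (C!m) * t!m else 0)"
    unfolding assignment_of_pattern_def by (intro sum.cong) auto
  then show ?thesis
    using assms(2) by simp
qed

lemma assignment_of_pattern_nonvar: "i \<notin> vars C \<Longrightarrow> assignment_of_pattern C t i = 0"
  unfolding assignment_of_pattern_def vars_def by (intro sum.neutral) auto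

lemma assignment_of_pattern_in_assigns:
  assumes "distinct (map snd C)" and "\<forall>(b, i)\<in>set C. b \<in> {-1, 1}"
    and "length t = length C" and "set t \<subseteq> {-1, 1}"
  shows "assignment_of_pattern C t \<in> assigns C"
  unfolding assigns_def
proof (intro CollectI conjI ballI allI impI)
  fix i assume "i \<in> vars C"
  then obtain m where m: "m < length C" "i = snd (C!m)"
    by (auto simp: vars_conv_nth)
  have "t!m \<in> set t"
    using assms(3) m(1) by simp
  then have "fst (C!m) \<in> {-1, 1}" "t!m \<in> {-1, 1}"
    using ball_set_case_prod_nth[OF assms(2) m(1)] assms(4) by auto
  then show "assignment_of_pattern C t i \<in> {-1, 1}"
    using assignment_of_pattern_var[OF assms(1) m(1)] m(2) by auto
qed (rule assignment_of_pattern_nonvar)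

lemma lit_vals_assignment_of_pattern:
  assumes "distinct (map snd C)" and "\<forall>(b, i)\<in>set C. b \<in> {-1, 1}" and "length t = length C"
  shows "map (lit_val (assignment_of_pattern C t)) C = t"
proof (rule nth_equalityI)
  fix m assume "m < length (map (lit_val (assignment_of_pattern C t)) C)"
  then have m: "m < length C" by simp
  then have "fst (C!m) * fst (C!m) = 1"
    using ball_set_case_prod_nth[OF assms(2) m] by auto
  then show "map (lit_val (assignment_of_pattern C t)) C ! m = t!m"
    using m assignment_of_pattern_var[OF assms(1) m]
    by (simp add: lit_val_def mult.assoc[symmetric])
qed (use assms(3) in simp)

lemma finite_assigns: "finite (assigns C)"
proof -
  have "assigns C \<subseteq> {\<alpha>. \<forall>i. (i \<in> vars C \<longrightarrow> \<alpha> i \<in> {-1, 1}) \<and> (i \<notin> vars C \<longrightarrow> \<alpha> i = 0)}"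
    unfolding assigns_def by auto
  moreover have "finite (vars C)"
    unfolding vars_def by simp
  ultimately show ?thesis
    by (rule finite_subset[OF _ finite_set_of_finite_funs]) auto
qed

definition induced_dist :: "clause \<Rightarrow> (real \<times> real list) list \<Rightarrow> (nat \<Rightarrow> real) \<Rightarrow> real" where
  "induced_dist C Q \<alpha> = (\<Sum>(w, t)\<leftarrow>Q. if \<alpha> = assignment_of_pattern C t then w else 0)"

lemma sum_induced_dist:
  assumes "finite A" and "\<forall>(w, t)\<in>set Q. assignment_of_pattern C t \<in> A"
  shows "(\<Sum>\<alpha>\<in>A. h \<alpha> * induced_dist C Q \<alpha>) = (\<Sum>(w, t)\<leftarrow>Q. w * h (assignment_of_pattern C t))"
  using assms(2)
proof (induction Q)
  case Nil
  then show ?case by (simp add: induced_dist_def)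
next
  case (Cons x Q)
  obtain w t where x: "x = (w, t)" by fastforce
  have "h \<alpha> * induced_dist C (x # Q) \<alpha> =
      (if \<alpha> = assignment_of_pattern C t then h \<alpha> * w else 0) + h \<alpha> * induced_dist C Q \<alpha>" for \<alpha>
    by (simp add: induced_dist_def x distrib_left)
  then have "(\<Sum>\<alpha>\<in>A. h \<alpha> * induced_dist C (x # Q) \<alpha>) =
      w * h (assignment_of_pattern C t) + (\<Sum>\<alpha>\<in>A. h \<alpha> * induced_dist C Q \<alpha>)"
    using Cons.prems assms(1) by (simp add: x sum.distrib sum.delta mult.commute)
  then show ?case
    using Cons by (simp add: x)
qed

definition nae_pattern_dist :: "nat \<Rightarrow> (real \<times> real list) list \<Rightarrow> bool" where
  "nae_pattern_dist k Q \<longleftrightarrow>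
     (\<forall>(w, t)\<in>set Q. w \<ge> 0 \<and> length t = k \<and> set t \<subseteq> {-1, 1} \<and> NAE t = 1) \<and>
     (\<Sum>(w, t)\<leftarrow>Q. w) = 1 \<and> (\<forall>m<k. (\<Sum>(w, t)\<leftarrow>Q. w * t!m) = 0)"

definition pattern_moment :: "(real \<times> real list) list \<Rightarrow> nat \<Rightarrow> nat \<Rightarrow> real" where
  "pattern_moment Q m l = (\<Sum>(w, t)\<leftarrow>Q. w * (t!m * t!l))"

text \<open>The part of a Basic SDP solution of value 1 that belongs to clause \<open>C\<close>, when
  \<open>v\<^sub>i = u\<^sub>i\<close> and \<open>v\<^sub>0\<close> is orthogonal to all \<open>u\<^sub>i\<close>.\<close>
definition nae_local_dist :: "clause \<Rightarrow> (nat \<Rightarrow> 'a::real_inner) \<Rightarrow> ((nat \<Rightarrow> real) \<Rightarrow> real) \<Rightarrow> bool" where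
  "nae_local_dist C u p \<longleftrightarrow>
     (\<forall>\<alpha>\<in>assigns C. p \<alpha> \<ge> 0) \<and> (\<Sum>\<alpha>\<in>assigns C. p \<alpha>) = 1 \<and>
     (\<forall>i\<in>vars C. \<forall>j\<in>vars C. (\<Sum>\<alpha>\<in>assigns C. \<alpha> i * \<alpha> j * p \<alpha>) = u i \<bullet> u j) \<and>
     (\<forall>i\<in>vars C. (\<Sum>\<alpha>\<in>assigns C. \<alpha> i * p \<alpha>) = 0) \<and>
     (\<Sum>\<alpha>\<in>assigns C. p \<alpha> * clause_val C \<alpha>) = 1"

lemma nae_local_dist_induced_dist:
  fixes u :: "nat \<Rightarrow> 'a::real_inner"
  assumes dist: "distinct (map snd C)" and signs: "\<forall>(b, i)\<in>set C. b \<in> {-1, 1}"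
    and Q: "nae_pattern_dist (length C) Q"
    and moments: "\<forall>m<length C. \<forall>l<length C.
      pattern_moment Q m l = lit_vec u (C!m) \<bullet> lit_vec u (C!l)"
  shows "nae_local_dist C u (induced_dist C Q)"
proof -
  let ?a = "assignment_of_pattern C"
  have pattern: "w \<ge> 0 \<and> length t = length C \<and> set t \<subseteq> {-1, 1} \<and> NAE t = 1"
    if "(w, t) \<in> set Q" for w t
    using Q that unfolding nae_pattern_dist_def by auto
  then have "\<forall>(w, t)\<in>set Q. ?a t \<in> assigns C"
    using assignment_of_pattern_in_assigns[OF dist signs] by auto
  note transfer = sum_induced_dist[OF finite_assigns this]
  have sign_sq: "fst (C!m) * fst (C!m) = 1" if "m < length C" for m
    using ball_set_case_prod_nth[OF signs that] by auto
  have "induced_dist C Q \<alpha> \<ge> 0" for \<alpha>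
    unfolding induced_dist_def by (intro sum_list_nonneg) (auto dest: pattern)
  moreover have "(\<Sum>\<alpha>\<in>assigns C. induced_dist C Q \<alpha>) = 1"
    using transfer[of "\<lambda>_. 1"] Q by (simp add: nae_pattern_dist_def)
  moreover have "(\<Sum>\<alpha>\<in>assigns C. \<alpha> i * \<alpha> j * induced_dist C Q \<alpha>) = u i \<bullet> u j"
    if ij: "i \<in> vars C" "j \<in> vars C" for i j
  proof -
    obtain m l where m: "m < length C" "i = snd (C!m)" and l: "l < length C" "j = snd (C!l)"
      using ij unfolding vars_conv_nth by blast
    have "(\<Sum>\<alpha>\<in>assigns C. \<alpha> i * \<alpha> j * induced_dist C Q \<alpha>) =
        (\<Sum>(w, t)\<leftarrow>Q. fst (C!m) * fst (C!l) * (w * (t!m * t!l)))"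
      using transfer[of "\<lambda>\<alpha>. \<alpha> i * \<alpha> j"] m l
      by (simp add: assignment_of_pattern_var[OF dist] case_prod_beta mult_ac)
    also have "\<dots> = fst (C!m) * fst (C!l) * (fst (C!m) * fst (C!l) * (u i \<bullet> u j))"
      using moments m l
      by (simp add: sum_list_const_mult pattern_moment_def lit_vec_inner case_prod_unfold)
    also have "\<dots> = u i \<bullet> u j"
      using sign_sq[OF m(1)] sign_sq[OF l(1)] by (simp add: mult_ac)
    finally show ?thesis .
  qed
  moreover have "(\<Sum>\<alpha>\<in>assigns C. \<alpha> i * induced_dist C Q \<alpha>) = 0" if i: "i \<in> vars C" for i
  proof -
    obtain m where m: "m < length C" "i = snd (C!m)"
      using i unfolding vars_conv_nth by blast
    have "(\<Sum>\<alpha>\<in>assigns C. \<alpha> i * induced_dist C Q \<alpha>) = (\<Sum>(w, t)\<leftarrow>Q. fst (C!m) * (w * t!m))"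
      using transfer[of "\<lambda>\<alpha>. \<alpha> i"] m
      by (simp add: assignment_of_pattern_var[OF dist] case_prod_beta mult_ac)
    also have "\<dots> = 0"
      using Q m by (simp add: sum_list_const_mult nae_pattern_dist_def case_prod_unfold)
    finally show ?thesis .
  qed
  moreover have "(\<Sum>\<alpha>\<in>assigns C. induced_dist C Q \<alpha> * clause_val C \<alpha>) = 1"
  proof -
    have "(\<Sum>\<alpha>\<in>assigns C. induced_dist C Q \<alpha> * clause_val C \<alpha>) =
        (\<Sum>(w, t)\<leftarrow>Q. w * clause_val C (?a t))"
      using transfer[of "clause_val C"] by (simp add: mult.commute)
    also have "\<dots> = (\<Sum>(w, t)\<leftarrow>Q. w)"
      using pattern by (intro arg_cong[where f = sum_list] map_cong)
        (auto simp: clause_val_def lit_vals_assignment_of_pattern[OF dist signs])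
    also have "\<dots> = 1"
      using Q by (simp add: nae_pattern_dist_def)
    finally show ?thesis .
  qed
  ultimately show ?thesis
    unfolding nae_local_dist_def by blast
qed

definition nae3_patterns :: "(real \<times> real list) list" where
  "nae3_patterns =
     map (\<lambda>t. (1/6, t)) [[1,1,-1], [1,-1,1], [-1,1,1], [-1,-1,1], [-1,1,-1], [1,-1,-1]]"

lemma nae_pattern_dist_nae3: "nae_pattern_dist 3 nae3_patterns"
  by (simp add: nae_pattern_dist_def nae3_patterns_def NAE_def numeral_eq_Suc less_Suc_eq
      all_conj_distrib)

lemma pattern_moment_nae3:
  "m < 3 \<Longrightarrow> l < 3 \<Longrightarrow> pattern_moment nae3_patterns m l = (if m = l then 1 else -1/3)"
  by (auto simp: pattern_moment_def nae3_patterns_def numeral_eq_Suc less_Suc_eq)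

definition nae5_patterns :: "(real \<times> real list) list" where
  "nae5_patterns =
     [(1/6, [1,1,1,1,-1]), (1/6, [-1,-1,-1,-1,1])] @
     map (\<lambda>t. (1/12, t))
       [[-1,1,1,1,1], [1,-1,1,1,1], [1,1,-1,1,1], [1,1,1,-1,1],
        [1,-1,-1,-1,-1], [-1,1,-1,-1,-1], [-1,-1,1,-1,-1], [-1,-1,-1,1,-1]]"

lemma nae_pattern_dist_nae5: "nae_pattern_dist 5 nae5_patterns"
  by (simp add: nae_pattern_dist_def nae5_patterns_def NAE_def numeral_eq_Suc less_Suc_eq
      all_conj_distrib)

lemma pattern_moment_nae5:
  "m < 5 \<Longrightarrow> l < 5 \<Longrightarrow>
    pattern_moment nae5_patterns m l = (if m = l then 1 else if m < 4 \<and> l < 4 then 1/3 else 0)"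
  by (auto simp: pattern_moment_def nae5_patterns_def numeral_eq_Suc less_Suc_eq)

lemma nae3_local_dist:
  fixes u :: "nat \<Rightarrow> 'a::real_inner"
  assumes len: "length C = 3" and lits: "\<forall>(b, i)\<in>set C. b \<in> {-1, 1} \<and> norm (u i) = 1"
    and inner: "\<forall>i<3. \<forall>j<3. i \<noteq> j \<longrightarrow> lit_vec u (C ! i) \<bullet> lit_vec u (C ! j) = - 1 / 3"
  shows "nae_local_dist C u (induced_dist C nae3_patterns)"
proof (rule nae_local_dist_induced_dist)
  have "lit_vec u (C!m) \<bullet> lit_vec u (C!m) = 1" if "m < 3" for m
    using ball_set_case_prod_nth[OF lits, of m] that len by (simp add: lit_vec_inner_self)
  then show "\<forall>m<length C. \<forall>l<length C.
      pattern_moment nae3_patterns m l = lit_vec u (C!m) \<bullet> lit_vec u (C!l)"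
    using inner by (simp add: len pattern_moment_nae3)
  show "distinct (map snd C)"
    using lits inner len by (intro distinct_vars_if_lit_inner_not_pm1) auto
qed (use lits len nae_pattern_dist_nae3 in auto)

lemma NAE_conv_subsingleton: "NAE ys = (if \<exists>c. set ys \<subseteq> {c} then 0 else 1)"
  unfolding NAE_def by (cases ys) auto

lemma nae_local_dist_permute_list:
  assumes "\<sigma> permutes {..<length C}"
  shows "nae_local_dist (permute_list \<sigma> C) u p = nae_local_dist C u p"
proof -
  have "vars (permute_list \<sigma> C) = vars C"
    using assms by (simp add: vars_def)
  moreover have "clause_val (permute_list \<sigma> C) \<alpha> = clause_val C \<alpha>" for \<alpha>
    using assms
    by (simp add: clause_val_def NAE_conv_subsingleton permute_list_map[symmetric])
  ultimately show ?thesis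
    unfolding nae_local_dist_def assigns_def by simp
qed

lemma nae5_local_dist:
  fixes u :: "nat \<Rightarrow> 'a::real_inner"
  assumes len: "length C = 5" and lits: "\<forall>(b, i)\<in>set C. b \<in> {-1, 1} \<and> norm (u i) = 1"
    and \<sigma>: "\<sigma> permutes {..<5}"
    and inner4: "\<forall>i<4. \<forall>j<4. i \<noteq> j \<longrightarrow> lit_vec u (C ! \<sigma> i) \<bullet> lit_vec u (C ! \<sigma> j) = 1 / 3"
    and inner5: "\<forall>i<4. lit_vec u (C ! \<sigma> i) \<bullet> lit_vec u (C ! \<sigma> 4) = 0"
  shows "nae_local_dist C u (induced_dist (permute_list \<sigma> C) nae5_patterns)"
proof -
  let ?C = "permute_list \<sigma> C"
  have perm: "\<sigma> permutes {..<length C}"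
    using \<sigma> len by simp
  have lits': "\<forall>(b, i)\<in>set ?C. b \<in> {-1, 1} \<and> norm (u i) = 1"
    using lits perm by simp
  have "lit_vec u (?C!m) \<bullet> lit_vec u (?C!l) =
      (if m = l then 1 else if m < 4 \<and> l < 4 then 1/3 else 0)" if ml: "m < 5" "l < 5" for m l
  proof -
    have "lit_vec u (?C!m) \<bullet> lit_vec u (?C!m) = 1"
      using ball_set_case_prod_nth[OF lits', of m] ml len by (simp add: lit_vec_inner_self)
    moreover have "?C!m = C ! \<sigma> m" "?C!l = C ! \<sigma> l"
      using ml len perm by (simp_all add: permute_list_nth)
    moreover have "m = 4 \<or> m < 4" "l = 4 \<or> l < 4"
      using ml by auto
    ultimately show ?thesis
      using inner4 inner5 by (auto simp: inner_commute)
  qed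
  then have "nae_local_dist ?C u (induced_dist ?C nae5_patterns)"
    using lits' len nae_pattern_dist_nae5
    by (intro nae_local_dist_induced_dist distinct_vars_if_lit_inner_not_pm1)
      (auto simp: pattern_moment_nae5 split: if_splits)
  then show ?thesis
    using perm by (simp add: nae_local_dist_permute_list)
qed

lemma sdp_feasible_of_local_dists:
  fixes u :: "nat \<Rightarrow> 'a::real_inner"
  assumes "\<forall>i\<in>{1..n}. norm (u i) = 1"
    and local: "\<forall>k<length \<Phi>. vars (snd (\<Phi>!k)) \<subseteq> {1..n} \<and> nae_local_dist (snd (\<Phi>!k)) u (p k)"
  obtains v where "sdp_feasible n \<Phi> v p"
proof -
  obtain v where unit: "\<forall>i\<le>n. ip n (v i) (v i) = 1"
    and gram: "\<forall>i\<in>{1..n}. \<forall>j\<in>{1..n}. ip n (v i) (v j) = u i \<bullet> u j"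
    and orth: "\<forall>i\<in>{1..n}. ip n (v i) (v 0) = 0"
    using exists_sdp_vectors assms(1) by blast
  have "sdp_feasible n \<Phi> v p"
    using local gram orth unfolding sdp_feasible_def Let_def nae_local_dist_def
    by (simp add: unit subset_iff)
  then show ?thesis ..
qed

lemma sdp_objective_of_local_dists:
  assumes "\<forall>k<length \<Phi>. nae_local_dist (snd (\<Phi>!k)) u (p k)"
  shows "sdp_objective \<Phi> p = (\<Sum>k<length \<Phi>. fst (\<Phi>!k))"
  using assms unfolding sdp_objective_def nae_local_dist_def by simp

lemma sdp_objective_le_total_weight:
  assumes "\<forall>k<length \<Phi>. fst (\<Phi>!k) \<ge> 0" and "sdp_feasible n \<Phi> v p"
  shows "sdp_objective \<Phi> p \<le> (\<Sum>k<length \<Phi>. fst (\<Phi>!k))"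
  unfolding sdp_objective_def
proof (intro sum_mono)
  fix k assume "k \<in> {..<length \<Phi>}"
  then have w: "fst (\<Phi>!k) \<ge> 0"
    and p: "\<forall>\<alpha>\<in>assigns (snd (\<Phi>!k)). p k \<alpha> \<ge> 0" "(\<Sum>\<alpha>\<in>assigns (snd (\<Phi>!k)). p k \<alpha>) = 1"
    using assms unfolding sdp_feasible_def Let_def by auto
  have "clause_val C \<alpha> \<le> 1" for C \<alpha>
    unfolding clause_val_def NAE_def by simp
  then have "(\<Sum>\<alpha>\<in>assigns (snd (\<Phi>!k)). p k \<alpha> * clause_val (snd (\<Phi>!k)) \<alpha>) \<le>
      (\<Sum>\<alpha>\<in>assigns (snd (\<Phi>!k)). p k \<alpha>)"
    using p(1) by (intro sum_mono) (simp add: mult_left_le)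
  then show "fst (\<Phi>!k) * (\<Sum>\<alpha>\<in>assigns (snd (\<Phi>!k)). p k \<alpha> * clause_val (snd (\<Phi>!k)) \<alpha>) \<le> fst (\<Phi>!k)"
    using w p(2) by (simp add: mult_left_le)
qed

lemma completeness_eq_1:
  assumes "nae35_instance n \<Phi>" and "sdp_feasible n \<Phi> v p" and "sdp_objective \<Phi> p = 1"
  shows "completeness n \<Phi> = 1"
proof -
  have "\<forall>k<length \<Phi>. fst (\<Phi>!k) \<ge> 0"
    using ball_set_case_prod_nth[OF conjunct1[OF assms(1)[unfolded nae35_instance_def]]]
    by (simp add: less_imp_le)
  moreover have "(\<Sum>k<length \<Phi>. fst (\<Phi>!k)) = 1"
    using assms(1) unfolding nae35_instance_def by simp
  ultimately have "sdp_objective \<Phi> p' \<le> 1" if "sdp_feasible n \<Phi> v' p'" for v' p'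
    using sdp_objective_le_total_weight that by metis
  then show ?thesis
    unfolding completeness_def using assms(2,3) by (intro cSup_eq_maximum) auto
qed

lemma nae35_clause_local_dist:
  fixes u :: "nat \<Rightarrow> 'a::real_inner"
  assumes "length C = 3 \<or> length C = 5"
    and lits: "\<forall>(b, i)\<in>set C. b \<in> {-1, 1} \<and> norm (u i) = 1"
    and three: "length C = 3 \<longrightarrow>
      (\<forall>i<3. \<forall>j<3. i \<noteq> j \<longrightarrow> lit_vec u (C ! i) \<bullet> lit_vec u (C ! j) = - 1 / 3)"
    and five: "length C = 5 \<longrightarrow>
      (\<exists>\<sigma>. \<sigma> permutes {..<5} \<and>
         (\<forall>i<4. \<forall>j<4. i \<noteq> j \<longrightarrow> lit_vec u (C ! \<sigma> i) \<bullet> lit_vec u (C ! \<sigma> j) = 1 / 3) \<and>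
         (\<forall>i<4. lit_vec u (C ! \<sigma> i) \<bullet> lit_vec u (C ! \<sigma> 4) = 0))"
  shows "\<exists>p. nae_local_dist C u p"
proof (cases "length C = 3")
  case True
  then show ?thesis
    using nae3_local_dist lits three by blast
next
  case False
  then show ?thesis
    using nae5_local_dist lits five assms(1) by blast
qed

theorem mainTheorem2:
  fixes n :: nat and \<Phi> :: nae_inst and u :: "nat \<Rightarrow> 'a::real_inner"
  assumes inst: "nae35_instance n \<Phi>"
    and unit: "\<forall>i\<in>{1..n}. norm (u i) = 1"
    and three: "\<forall>(w, C)\<in>set \<Phi>. length C = 3 \<longrightarrow>
        (\<forall>i<3. \<forall>j<3. i \<noteq> j \<longrightarrow> lit_vec u (C ! i) \<bullet> lit_vec u (C ! j) = - 1 / 3)"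
    and five: "\<forall>(w, C)\<in>set \<Phi>. length C = 5 \<longrightarrow>
        (\<exists>\<sigma>. \<sigma> permutes {..<5} \<and>
           (\<forall>i<4. \<forall>j<4. i \<noteq> j \<longrightarrow>
              lit_vec u (C ! \<sigma> i) \<bullet> lit_vec u (C ! \<sigma> j) = 1 / 3) \<and>
           (\<forall>i<4. lit_vec u (C ! \<sigma> i) \<bullet> lit_vec u (C ! \<sigma> 4) = 0))"
  shows "completeness n \<Phi> = 1"
proof -
  have "\<exists>p. vars C \<subseteq> {1..n} \<and> nae_local_dist C u p" if "(w, C) \<in> set \<Phi>" for w C
  proof -
    have "length C = 3 \<or> length C = 5" and lits: "\<forall>(b, i)\<in>set C. b \<in> {-1, 1} \<and> i \<in> {1..n}"
      using inst that unfolding nae35_instance_def by auto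
    then show ?thesis
      using nae35_clause_local_dist[of C u] unit three five that by (fastforce simp: vars_def)
  qed
  then have "\<forall>k<length \<Phi>. \<exists>p. vars (snd (\<Phi>!k)) \<subseteq> {1..n} \<and> nae_local_dist (snd (\<Phi>!k)) u p"
    by (metis nth_mem prod.collapse)
  then obtain p where p: "\<forall>k<length \<Phi>. vars (snd (\<Phi>!k)) \<subseteq> {1..n} \<and> nae_local_dist (snd (\<Phi>!k)) u (p k)"
    by metis
  then obtain v where "sdp_feasible n \<Phi> v p"
    using sdp_feasible_of_local_dists unit by blast
  moreover have "sdp_objective \<Phi> p = 1"
    using p sdp_objective_of_local_dists[of \<Phi> u p] inst unfolding nae35_instance_def by simp
  ultimately show ?thesis
    using completeness_eq_1 inst by blast
qed

end
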